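(* Let $\Delta$ be a finite set with $|\Delta|\ge2$, $\ell\ge2$, $\Omega=\Delta^\ell$, $W=\mathrm{Sym}\,\Delta\wr S_\ell$ in product action on $\Omega$, $G\le W$, and let $M$ be a minimal normal subgroup of $G$ transitive on $\Omega$, $M=T_1\times\cdots\times T_k$ with the $T_i$ isomorphic finite simple groups. Let $\Gamma$ be a connected graph with vertex set $\Omega$ such that $G\le\mathrm{Aut}\,\Gamma$. Suppose $M$ is non-regular on $\Omega$ and that, for vertices $\alpha$, the stabiliser $G_\alpha$ is quasiprimitive on the neighbourhood $\Gamma(\alpha)$. Then $\Gamma$ is $M$-arc-transitive, and so $M_\alpha$ is transitive on $\Gamma(\alpha)$ for all $\alpha\in\Omega$.
   Context: Product action: $(\delta_1,\dots,\delta_\ell)^{(g_1,\dots,g_\ell)h}=(\delta_{1h^{-1}}g_{1h^{-1}},\dots,\delta_{\ell h^{-1}}g_{\ell h^{-1}})$. $\Gamma(\alpha)$ is the set of neighbours of $\alpha$. A permutation group is quasiprimitive if every non-trivial normal subgroup is transitive. $\Gamma$ is $M$-arc-transitive if $M$ acts transitively on the ordered pairs of adjacent vertices. Graphs are finite, simple and undirected. *)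

theory Defs
  imports "HOL-Algebra.Algebra" "HOL-Library.FuncSet"
begin

definition perm_grp :: "'b set \<Rightarrow> ('b \<Rightarrow> 'b) set \<Rightarrow> ('b \<Rightarrow> 'b) monoid" where
  "perm_grp S H = (BijGroup S)\<lparr>carrier := H\<rparr>"

definition power_set :: "'a set \<Rightarrow> nat \<Rightarrow> (nat \<Rightarrow> 'a) set" where
  "power_set D l = ({..<l} \<rightarrow>\<^sub>E D)"

text \<open>The wreath product Sym D wr S_l in product action on D^l:
  (d_1,..,d_l)^((g_1,..,g_l)h) has coordinate h(j) equal to g_j(d_j),
  i.e. coordinate i equal to g_{i h^-1}(d_{i h^-1}).\<close>
definition wreath_prod_action :: "'a set \<Rightarrow> nat \<Rightarrow> ((nat \<Rightarrow> 'a) \<Rightarrow> (nat \<Rightarrow> 'a)) set" where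
  "wreath_prod_action D l =
    {s \<in> Bij (power_set D l). \<exists>(g :: nat \<Rightarrow> 'a \<Rightarrow> 'a) (h :: nat \<Rightarrow> nat).
        bij_betw h {..<l} {..<l} \<and> (\<forall>j<l. bij_betw (g j) D D) \<and>
        (\<forall>d \<in> power_set D l. \<forall>j<l. s d (h j) = g j (d j))}"

definition minimal_normal :: "'c set \<Rightarrow> ('c, 'd) monoid_scheme \<Rightarrow> bool" where
  "minimal_normal N G \<longleftrightarrow> normal N G \<and> N \<noteq> {\<one>\<^bsub>G\<^esub>} \<and>
     (\<forall>K. normal K G \<and> K \<subseteq> N \<longrightarrow> K = {\<one>\<^bsub>G\<^esub>} \<or> K = N)"

definition transitive_on :: "('b \<Rightarrow> 'b) set \<Rightarrow> 'b set \<Rightarrow> bool" where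
  "transitive_on H S \<longleftrightarrow> (\<forall>x\<in>S. \<forall>y\<in>S. \<exists>h\<in>H. h x = y)"

definition stabiliser :: "('b \<Rightarrow> 'b) set \<Rightarrow> 'b \<Rightarrow> ('b \<Rightarrow> 'b) set" where
  "stabiliser H a = {h \<in> H. h a = a}"

definition regular_on :: "('b \<Rightarrow> 'b) set \<Rightarrow> 'b set \<Rightarrow> bool" where
  "regular_on H S \<longleftrightarrow> transitive_on H S \<and> (\<forall>a\<in>S. stabiliser H a = {\<lambda>x\<in>S. x})"

text \<open>A group H of permutations of Omega, leaving Y invariant, induces a permutation
  group on Y; it is quasiprimitive iff every normal subgroup of H acting non-trivially
  on Y is transitive on Y (normal subgroups of the induced group are exactly the images
  of normal subgroups of H).\<close>
definition quasiprimitive_on :: "'b set \<Rightarrow> ('b \<Rightarrow> 'b) set \<Rightarrow> 'b set \<Rightarrow> bool" where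
  "quasiprimitive_on S H Y \<longleftrightarrow>
     (\<forall>N. normal N (perm_grp S H) \<and> (\<exists>n\<in>N. \<exists>y\<in>Y. n y \<noteq> y) \<longrightarrow> transitive_on N Y)"

definition simple_graph :: "'b set \<Rightarrow> ('b \<Rightarrow> 'b \<Rightarrow> bool) \<Rightarrow> bool" where
  "simple_graph V E \<longleftrightarrow> finite V \<and> (\<forall>x y. E x y \<longrightarrow> x \<in> V \<and> y \<in> V) \<and>
     (\<forall>x y. E x y \<longrightarrow> E y x) \<and> (\<forall>x. \<not> E x x)"

definition connected_graph :: "'b set \<Rightarrow> ('b \<Rightarrow> 'b \<Rightarrow> bool) \<Rightarrow> bool" where
  "connected_graph V E \<longleftrightarrow> (\<forall>x\<in>V. \<forall>y\<in>V. (x, y) \<in> {(u, v). E u v}\<^sup>*)"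

definition neighbours :: "('b \<Rightarrow> 'b \<Rightarrow> bool) \<Rightarrow> 'b \<Rightarrow> 'b set" where
  "neighbours E a = {b. E a b}"

definition automorphisms_of :: "('b \<Rightarrow> 'b) set \<Rightarrow> 'b set \<Rightarrow> ('b \<Rightarrow> 'b \<Rightarrow> bool) \<Rightarrow> bool" where
  "automorphisms_of H V E \<longleftrightarrow> (\<forall>g\<in>H. \<forall>x\<in>V. \<forall>y\<in>V. E x y \<longleftrightarrow> E (g x) (g y))"

definition arc_transitive :: "('b \<Rightarrow> 'b) set \<Rightarrow> ('b \<Rightarrow> 'b \<Rightarrow> bool) \<Rightarrow> bool" where
  "arc_transitive H E \<longleftrightarrow>
     (\<forall>a b c d. E a b \<and> E c d \<longrightarrow> (\<exists>h\<in>H. h a = c \<and> h b = d))"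

end

theory Submission
  imports Defs
begin

text \<open>The vertex stabiliser \<open>M\<^sub>\<alpha>\<close> is normal in \<open>G\<^sub>\<alpha>\<close>, so by quasiprimitivity it is either
  transitive on \<open>\<Gamma>(\<alpha>)\<close> or fixes \<open>\<Gamma>(\<alpha>)\<close> pointwise. In the second case, conjugating by the
  vertex-transitive group \<open>M\<close> shows that every \<open>M\<^sub>\<beta>\<close> fixes \<open>\<Gamma>(\<beta>)\<close> pointwise; walking along paths
  of the connected graph then forces \<open>M\<^sub>\<alpha> = 1\<close>, i.e. \<open>M\<close> is regular. Hence every \<open>M\<^sub>\<alpha>\<close> is
  transitive on \<open>\<Gamma>(\<alpha>)\<close>, and together with vertex-transitivity this gives arc-transitivity.\<close>

lemma group_action_BijGroup: "group_action (BijGroup S) S (\<lambda>f. f)"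
  by (simp add: group_action_def group_hom_def group_hom_axioms_def hom_def group_BijGroup)

lemma group_action_perm_grp:
  assumes "subgroup H (BijGroup S)"
  shows "group_action (perm_grp S H) S (\<lambda>f. f)"
  unfolding perm_grp_def by (rule group_action.induced_action[OF group_action_BijGroup assms])

lemma stabilizer_perm_grp [simp]: "stabilizer (perm_grp S H) (\<lambda>f. f) a = stabiliser H a"
  by (simp add: stabilizer_def stabiliser_def perm_grp_def)

lemma subgroup_stabiliser:
  assumes H: "subgroup H (BijGroup S)" and a: "a \<in> S"
  shows "subgroup (stabiliser H a) (BijGroup S)"
proof -
  have "subgroup (stabiliser H a) (perm_grp S H)"
    using group_action.stabilizer_subgroup[OF group_action_perm_grp[OF H] a] by simp
  then show ?thesis
    using group.incl_subgroup[OF group_BijGroup H] by (simp add: perm_grp_def)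
qed

lemma normal_perm_grp_imp_subgroup:
  assumes G: "subgroup G (BijGroup S)" and M: "M \<lhd> perm_grp S G"
  shows "subgroup M (BijGroup S)" and "M \<subseteq> G"
proof -
  have "subgroup M (perm_grp S G)" using M normal_imp_subgroup by blast
  then show "subgroup M (BijGroup S)" and "M \<subseteq> G"
    using group.incl_subgroup[OF group_BijGroup G] subgroup.subset
    by (fastforce simp: perm_grp_def)+
qed

lemma normal_stabiliser_in_stabiliser:
  assumes G: "subgroup G (BijGroup S)" and M: "M \<lhd> perm_grp S G" and a: "a \<in> S"
  shows "stabiliser M a \<lhd> perm_grp S (stabiliser G a)"
proof -
  have "M \<inter> stabiliser G a \<lhd> (BijGroup S)\<lparr>carrier := G \<inter> stabiliser G a\<rparr>"
    using group.normal_inter[OF group_BijGroup G subgroup_stabiliser[OF G a]] M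
    by (simp add: perm_grp_def)
  moreover have "M \<inter> stabiliser G a = stabiliser M a"
    using normal_perm_grp_imp_subgroup(2)[OF G M] by (auto simp: stabiliser_def)
  moreover have "G \<inter> stabiliser G a = stabiliser G a" by (auto simp: stabiliser_def)
  ultimately show ?thesis by (simp add: perm_grp_def)
qed

definition stabiliser_fixes_neighbours ::
    "('b \<Rightarrow> 'b) set \<Rightarrow> ('b \<Rightarrow> 'b \<Rightarrow> bool) \<Rightarrow> 'b \<Rightarrow> bool" where
  "stabiliser_fixes_neighbours H E a \<longleftrightarrow> (\<forall>h\<in>stabiliser H a. \<forall>y\<in>neighbours E a. h y = y)"

lemma quasiprimitive_normal_stabiliser_cases:
  assumes "quasiprimitive_on S (stabiliser G a) (neighbours E a)"
    and "stabiliser M a \<lhd> perm_grp S (stabiliser G a)"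
  shows "transitive_on (stabiliser M a) (neighbours E a) \<or> stabiliser_fixes_neighbours M E a"
  using assms unfolding quasiprimitive_on_def stabiliser_fixes_neighbours_def by blast

lemma stabiliser_fixes_neighbours_image:
  assumes M: "subgroup M (BijGroup S)" and aut: "automorphisms_of M S E"
    and edges: "\<forall>x y. E x y \<longrightarrow> x \<in> S \<and> y \<in> S"
    and a: "a \<in> S" and m: "m \<in> M" and fix_a: "stabiliser_fixes_neighbours M E a"
  shows "stabiliser_fixes_neighbours M E (m a)"
  unfolding stabiliser_fixes_neighbours_def
proof (intro ballI)
  interpret A: group_action "perm_grp S M" S "\<lambda>f. f"
    by (rule group_action_perm_grp[OF M])
  interpret P: group "perm_grp S M"
    using A.group_hom group_hom.axioms(1) by blast
  fix n y assume n: "n \<in> stabiliser M (m a)" and y: "y \<in> neighbours E (m a)"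
  define m' where "m' = inv\<^bsub>perm_grp S M\<^esub> m"
  have mM: "m \<in> carrier (perm_grp S M)" and nM: "n \<in> carrier (perm_grp S M)"
    using m n by (auto simp: perm_grp_def stabiliser_def)
  have m'M: "m' \<in> carrier (perm_grp S M)" using P.inv_closed[OF mM] by (simp add: m'_def)
  have yS: "y \<in> S" using y edges by (auto simp: neighbours_def)
  have m'm: "m' (m x) = x" if "x \<in> S" for x
    using A.orbit_sym_aux[OF mM that refl] by (simp add: m'_def)
  have mm': "m (m' x) = x" if "x \<in> S" for x
    using A.orbit_sym_aux[OF m'M that refl] P.inv_inv[OF mM] by (simp add: m'_def)
  define z where "z = m' y"
  have zS: "z \<in> S" using A.element_image[OF m'M yS] by (simp add: z_def)
  have mz: "m z = y" using mm'[OF yS] by (simp add: z_def)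
  have "E (m a) (m z)" using y mz by (simp add: neighbours_def)
  moreover have "E a z \<longleftrightarrow> E (m a) (m z)"
    using aut m a zS unfolding automorphisms_of_def by blast
  ultimately have "E a z" by blast
  define n' where "n' = m' \<otimes>\<^bsub>perm_grp S M\<^esub> n \<otimes>\<^bsub>perm_grp S M\<^esub> m"
  have n'M: "n' \<in> carrier (perm_grp S M)" using m'M nM mM by (simp add: n'_def)
  have n'x: "n' x = m' (n (m x))" if x: "x \<in> S" for x
  proof -
    have "m x \<in> S" using A.element_image[OF mM x refl] .
    then show ?thesis
      using A.composition_rule[OF x P.m_closed[OF m'M nM] mM]
        A.composition_rule[OF _ m'M nM] by (simp add: n'_def)
  qed
  have "n' a = a" using n a m'm[OF a] by (simp add: n'x stabiliser_def)
  then have "n' z = z"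
    using fix_a n'M \<open>E a z\<close>
    by (auto simp: stabiliser_fixes_neighbours_def stabiliser_def neighbours_def perm_grp_def)
  then have "m' (n y) = m' y" using n'x[OF zS] mz by (simp add: z_def)
  then show "n y = y"
    using mm' yS A.element_image[OF nM yS] by metis
qed

lemma stabiliser_trivial_if_fixes_neighbours:
  assumes MB: "M \<subseteq> Bij S" and conn: "connected_graph S E"
    and edges: "\<forall>x y. E x y \<longrightarrow> x \<in> S \<and> y \<in> S"
    and fix_all: "\<forall>b\<in>S. stabiliser_fixes_neighbours M E b"
    and a: "a \<in> S" and n: "n \<in> stabiliser M a"
  shows "n = (\<lambda>x\<in>S. x)"
proof
  fix x
  show "n x = (\<lambda>x\<in>S. x) x"
  proof (cases "x \<in> S")
    case True
    have "(a, x) \<in> {(u, v). E u v}\<^sup>*" using conn a True by (simp add: connected_graph_def)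
    then have "n x = x"
    proof (induction rule: rtrancl_induct)
      case base
      show ?case using n by (simp add: stabiliser_def)
    next
      case (step u v)
      then show ?case
        using fix_all edges n by (auto simp: stabiliser_fixes_neighbours_def stabiliser_def neighbours_def)
    qed
    with True show ?thesis by simp
  next
    case False
    have "n \<in> extensional S" using n MB Bij_imp_extensional by (auto simp: stabiliser_def)
    with False show ?thesis by (simp add: extensional_def)
  qed
qed

lemma regular_on_if_stabiliser_fixes_neighbours:
  assumes M: "subgroup M (BijGroup S)" and trans: "transitive_on M S"
    and aut: "automorphisms_of M S E" and edges: "\<forall>x y. E x y \<longrightarrow> x \<in> S \<and> y \<in> S"
    and conn: "connected_graph S E"
    and a: "a \<in> S" and fix_a: "stabiliser_fixes_neighbours M E a"
  shows "regular_on M S"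
proof -
  have MB: "M \<subseteq> Bij S" using subgroup.subset[OF M] by (simp add: BijGroup_def)
  have fix_all: "\<forall>b\<in>S. stabiliser_fixes_neighbours M E b"
  proof
    fix b assume "b \<in> S"
    then obtain m where "m \<in> M" "m a = b" using trans a by (auto simp: transitive_on_def)
    then show "stabiliser_fixes_neighbours M E b"
      using stabiliser_fixes_neighbours_image[OF M aut edges a _ fix_a] by blast
  qed
  have "stabiliser M b = {\<lambda>x\<in>S. x}" if b: "b \<in> S" for b
  proof
    show "stabiliser M b \<subseteq> {\<lambda>x\<in>S. x}"
      using stabiliser_trivial_if_fixes_neighbours[OF MB conn edges fix_all b] by blast
    show "{\<lambda>x\<in>S. x} \<subseteq> stabiliser M b"
      using subgroup.one_closed[OF M] b by (simp add: BijGroup_def stabiliser_def)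
  qed
  with trans show ?thesis by (simp add: regular_on_def)
qed

lemma arc_transitive_if_locally_transitive:
  assumes M: "subgroup M (BijGroup S)" and trans: "transitive_on M S"
    and aut: "automorphisms_of M S E" and edges: "\<forall>x y. E x y \<longrightarrow> x \<in> S \<and> y \<in> S"
    and local: "\<forall>a\<in>S. transitive_on (stabiliser M a) (neighbours E a)"
  shows "arc_transitive M E"
  unfolding arc_transitive_def
proof (intro allI impI)
  interpret A: group_action "perm_grp S M" S "\<lambda>f. f"
    by (rule group_action_perm_grp[OF M])
  fix a b c d assume ab_cd: "E a b \<and> E c d"
  then have a: "a \<in> S" and b: "b \<in> S" and c: "c \<in> S" using edges by blast+
  obtain m where m: "m \<in> M" and mac: "m a = c" using trans a c by (auto simp: transitive_on_def)
  have "E c (m b)" using aut m a b ab_cd mac unfolding automorphisms_of_def by blast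
  then obtain n where n: "n \<in> stabiliser M c" and nd: "n (m b) = d"
    using local c ab_cd unfolding transitive_on_def neighbours_def by blast
  have nm: "n \<otimes>\<^bsub>perm_grp S M\<^esub> m \<in> M"
    using n m subgroup.m_closed[OF M] by (auto simp: perm_grp_def stabiliser_def)
  have nm_x: "(n \<otimes>\<^bsub>perm_grp S M\<^esub> m) x = n (m x)" if "x \<in> S" for x
    using A.composition_rule[OF that] n m by (auto simp: perm_grp_def stabiliser_def)
  have "(n \<otimes>\<^bsub>perm_grp S M\<^esub> m) a = c" "(n \<otimes>\<^bsub>perm_grp S M\<^esub> m) b = d"
    using nm_x[OF a] nm_x[OF b] mac n nd by (auto simp: stabiliser_def)
  with nm show "\<exists>h\<in>M. h a = c \<and> h b = d" by blast
qed

lemma locally_transitive_if_not_regular: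
  assumes G: "subgroup G (BijGroup S)" and M: "M \<lhd> perm_grp S G"
    and trans: "transitive_on M S" and aut: "automorphisms_of M S E"
    and edges: "\<forall>x y. E x y \<longrightarrow> x \<in> S \<and> y \<in> S" and conn: "connected_graph S E"
    and not_regular: "\<not> regular_on M S"
    and qp: "\<forall>a\<in>S. quasiprimitive_on S (stabiliser G a) (neighbours E a)"
  shows "\<forall>a\<in>S. transitive_on (stabiliser M a) (neighbours E a)"
proof
  fix a assume a: "a \<in> S"
  have "\<not> stabiliser_fixes_neighbours M E a"
    using regular_on_if_stabiliser_fixes_neighbours[OF normal_perm_grp_imp_subgroup(1)[OF G M]
        trans aut edges conn a]
      not_regular by blast
  then show "transitive_on (stabiliser M a) (neighbours E a)"
    using quasiprimitive_normal_stabiliser_cases[OF qp[rule_format, OF a]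
        normal_stabiliser_in_stabiliser[OF G M a]] by blast
qed

theorem lemma3p2:
  fixes D :: "'a set" and l :: nat
    and G M :: "((nat \<Rightarrow> 'a) \<Rightarrow> (nat \<Rightarrow> 'a)) set"
    and E :: "(nat \<Rightarrow> 'a) \<Rightarrow> (nat \<Rightarrow> 'a) \<Rightarrow> bool"
  assumes "finite D" and "card D \<ge> 2" and "l \<ge> 2"
    and "subgroup G (BijGroup (power_set D l))"
    and "G \<subseteq> wreath_prod_action D l"
    and "minimal_normal M (perm_grp (power_set D l) G)"
    and "transitive_on M (power_set D l)"
    and "\<exists>(k::nat) (T :: nat \<Rightarrow> ((nat \<Rightarrow> 'a) \<Rightarrow> (nat \<Rightarrow> 'a)) set).
           (\<forall>i<k. subgroup (T i) (perm_grp (power_set D l) M) \<and>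
                  simple_group (perm_grp (power_set D l) (T i)) \<and>
                  perm_grp (power_set D l) (T i) \<cong> perm_grp (power_set D l) (T 0)) \<and>
           perm_grp (power_set D l) M \<cong>
             product_group {..<k} (\<lambda>i. perm_grp (power_set D l) (T i))"
    and "simple_graph (power_set D l) E"
    and "connected_graph (power_set D l) E"
    and "automorphisms_of G (power_set D l) E"
    and "\<not> regular_on M (power_set D l)"
    and "\<forall>a \<in> power_set D l.
           quasiprimitive_on (power_set D l) (stabiliser G a) (neighbours E a)"
  shows "arc_transitive M E \<and>
         (\<forall>a \<in> power_set D l. transitive_on (stabiliser M a) (neighbours E a))"
proof -
  let ?\<Omega> = "power_set D l"
  have G: "subgroup G (BijGroup ?\<Omega>)" by fact
  have M: "M \<lhd> perm_grp ?\<Omega> G" using assms(6) by (simp add: minimal_normal_def)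
  have edges: "\<forall>x y. E x y \<longrightarrow> x \<in> ?\<Omega> \<and> y \<in> ?\<Omega>"
    using assms(9) by (simp add: simple_graph_def)
  have aut: "automorphisms_of M ?\<Omega> E"
    using assms(11) normal_perm_grp_imp_subgroup(2)[OF G M] by (auto simp: automorphisms_of_def)
  have local: "\<forall>a\<in>?\<Omega>. transitive_on (stabiliser M a) (neighbours E a)"
    using locally_transitive_if_not_regular[OF G M assms(7) aut edges assms(10,12,13)] .
  moreover have "arc_transitive M E"
    using arc_transitive_if_locally_transitive[OF normal_perm_grp_imp_subgroup(1)[OF G M]
        assms(7) aut edges local] .
  ultimately show ?thesis by blast
qed

end
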